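(* Let $q$ be a prime power, $2\le k\le n$, and let $\mathcal{C}\subseteq\mathbb{F}_q^n$ be a linear code of dimension $k$ and minimum Hamming distance $d$. Then $$\mathbb{E}[\mathcal{C}] = n(H_n - H_{d-1}) - \sum_{s=k}^{n-d}\frac{\alpha(\mathcal{C},s)}{\binom{n-1}{s}}.$$
   Context: $H_m=\sum_{i=1}^m 1/i$, with $H_0=0$. $\mathbb{E}[\mathcal{C}]$ is $\mathbb{E}[G]$ for any generator matrix $G\in\mathbb{F}_q^{k\times n}$ of $\mathcal{C}$, the expected number of draws when columns of $G$ are drawn independently and uniformly at random from its $n$ columns (with repetition) until the drawn columns span $\mathbb{F}_q^k$. Writing $g_j$ for the $j$-th column of a generator matrix, $\alpha(\mathcal{C},s)=|\{S\subseteq\{1,\dots,n\}: |S|=s,\ \langle g_j:j\in S\rangle=\mathbb{F}_q^k\}|$, the number of information sets of $\mathcal{C}$ of size $s$. *)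

theory Defs
  imports "HOL-Analysis.Analysis" "HOL-Library.FuncSet"
begin

text \<open>A k x n matrix over a finite field is a function G :: nat => nat => 'a,
  entry G i j for i < k, j < n. Column j is the vector (\<lambda>i. G i j) in F_q^k.\<close>

definition cols_span :: "nat \<Rightarrow> (nat \<Rightarrow> nat \<Rightarrow> 'a::field) \<Rightarrow> nat set \<Rightarrow> bool" where
  "cols_span k G S \<longleftrightarrow>
     (\<forall>v :: nat \<Rightarrow> 'a. \<exists>c :: nat \<Rightarrow> 'a. \<forall>i<k. v i = (\<Sum>j\<in>S. c j * G i j))"

definition rows_indep :: "nat \<Rightarrow> nat \<Rightarrow> (nat \<Rightarrow> nat \<Rightarrow> 'a::field) \<Rightarrow> bool" where
  "rows_indep k n G \<longleftrightarrow>
     (\<forall>c :: nat \<Rightarrow> 'a. (\<forall>j<n. (\<Sum>i<k. c i * G i j) = 0) \<longrightarrow> (\<forall>i<k. c i = 0))"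

definition code_of :: "nat \<Rightarrow> nat \<Rightarrow> (nat \<Rightarrow> nat \<Rightarrow> 'a::field) \<Rightarrow> (nat \<Rightarrow> 'a) set" where
  "code_of k n G = {x. \<exists>c :: nat \<Rightarrow> 'a. x = (\<lambda>j. if j < n then (\<Sum>i<k. c i * G i j) else 0)}"

text \<open>F_q^n as functions zero outside {..<n}.\<close>
definition space_n :: "nat \<Rightarrow> (nat \<Rightarrow> 'a::zero) set" where
  "space_n n = {x. \<forall>j\<ge>n. x j = 0}"

definition linear_code :: "nat \<Rightarrow> (nat \<Rightarrow> 'a::field) set \<Rightarrow> bool" where
  "linear_code n C \<longleftrightarrow> C \<subseteq> space_n n \<and> (\<lambda>_. 0) \<in> C \<and>
     (\<forall>x\<in>C. \<forall>y\<in>C. (\<lambda>j. x j + y j) \<in> C) \<and> (\<forall>a. \<forall>x\<in>C. (\<lambda>j. a * x j) \<in> C)"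

definition generator_matrix :: "nat \<Rightarrow> nat \<Rightarrow> (nat \<Rightarrow> nat \<Rightarrow> 'a::field) \<Rightarrow> (nat \<Rightarrow> 'a) set \<Rightarrow> bool" where
  "generator_matrix k n G C \<longleftrightarrow> rows_indep k n G \<and> code_of k n G = C"

definition hamming_weight :: "nat \<Rightarrow> (nat \<Rightarrow> 'a::zero) \<Rightarrow> nat" where
  "hamming_weight n x = card {j. j < n \<and> x j \<noteq> 0}"

definition min_dist :: "nat \<Rightarrow> (nat \<Rightarrow> 'a::zero) set \<Rightarrow> nat" where
  "min_dist n C = Min {hamming_weight n x | x. x \<in> C \<and> x \<noteq> (\<lambda>_. 0)}"

definition alpha :: "nat \<Rightarrow> nat \<Rightarrow> (nat \<Rightarrow> nat \<Rightarrow> 'a::field) \<Rightarrow> nat \<Rightarrow> nat" where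
  "alpha k n G s = card {S. S \<subseteq> {..<n} \<and> card S = s \<and> cols_span k G S}"

text \<open>E[G]: expectation of the stopping time T = first t such that the first t
  uniformly drawn columns (with repetition) span F_q^k. A length-t draw sequence is
  f in {..<t} ->E {..<n}, each having probability 1/n^t; P(T = t) is the proportion of
  such sequences whose first t columns span but first t-1 do not.\<close>
definition prob_stop :: "nat \<Rightarrow> nat \<Rightarrow> (nat \<Rightarrow> nat \<Rightarrow> 'a::field) \<Rightarrow> nat \<Rightarrow> real" where
  "prob_stop k n G t =
     real (card {f \<in> {..<t} \<rightarrow>\<^sub>E {..<n}.
                  cols_span k G (f ` {..<t}) \<and> \<not> cols_span k G (f ` {..<t - 1})})
     / real n ^ t"

definition expected_draws :: "nat \<Rightarrow> nat \<Rightarrow> (nat \<Rightarrow> nat \<Rightarrow> 'a::field) \<Rightarrow> real" where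
  "expected_draws k n G = (\<Sum>t. real t * prob_stop k n G t)"

end

theory Submission
  imports Defs
begin

(* Let T be the number of draws. Then E[T] is the sum over t of P(T > t), and T > t says that the
   set of the first t drawn indices is some non-spanning S. For a fixed S of size s < n, the expected
   number of t at which the set of the first t draws is exactly S equals 1 / binom(n-1, s), by the
   recursion obtained from conditioning on the last draw. A non-spanning S has at most n - d
   elements: some nonzero combination of the rows of G vanishes on S, and that is a nonzero
   codeword of weight at most n - |S|. Counting the non-spanning s-sets as binom(n, s) - alpha(C, s)
   and using binom(n, s) / binom(n-1, s) = n / (n - s) produces the harmonic numbers. *)

section \<open>Spanning sets of columns\<close>

lemma cols_span_mono:
  assumes "cols_span k G S" "S \<subseteq> T" "finite T"
  shows "cols_span k G T"
  unfolding cols_span_def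
proof
  fix v :: "nat \<Rightarrow> 'a"
  obtain c where c: "\<forall>i<k. v i = (\<Sum>j\<in>S. c j * G i j)"
    using assms(1) unfolding cols_span_def by blast
  have "(\<Sum>j\<in>T. (if j \<in> S then c j else 0) * G i j) = (\<Sum>j\<in>S. c j * G i j)" for i
    by (rule sum.mono_neutral_cong_right[OF assms(3) assms(2)]) auto
  with c show "\<exists>c. \<forall>i<k. v i = (\<Sum>j\<in>T. c j * G i j)"
    by (intro exI[of _ "\<lambda>j. if j \<in> S then c j else 0"]) simp
qed

text \<open>The matrix in the last hypothesis arises from \<open>G\<close> by clearing row \<open>k\<close> with the pivot
  \<open>G k j\<^sub>0\<close> through column operations.\<close>
lemma cols_span_Suc_if_cols_span_eliminated:
  fixes G :: "nat \<Rightarrow> nat \<Rightarrow> 'a::field"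
  assumes "finite S" "j\<^sub>0 \<in> S" "G k j\<^sub>0 \<noteq> 0"
    and "cols_span k (\<lambda>i j. G i j - G k j / G k j\<^sub>0 * G i j\<^sub>0) S"
  shows "cols_span (Suc k) G S"
  unfolding cols_span_def
proof
  fix v :: "nat \<Rightarrow> 'a"
  define \<mu> where "\<mu> = v k / G k j\<^sub>0"
  obtain a where a: "\<forall>i<k. v i - \<mu> * G i j\<^sub>0 = (\<Sum>j\<in>S. a j * (G i j - G k j / G k j\<^sub>0 * G i j\<^sub>0))"
    using assms(4) unfolding cols_span_def by (elim allE[of _ "\<lambda>i. v i - \<mu> * G i j\<^sub>0"]) blast
  define \<nu> where "\<nu> = (\<Sum>j\<in>S. a j * G k j) / G k j\<^sub>0"
  define c where "c = a(j\<^sub>0 := a j\<^sub>0 + \<mu> - \<nu>)"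
  have c_comb: "(\<Sum>j\<in>S. c j * G i j) = (\<Sum>j\<in>S. a j * G i j) + (\<mu> - \<nu>) * G i j\<^sub>0" for i
    using assms(1,2) by (simp add: c_def sum.remove algebra_simps)
  have a_comb: "(\<Sum>j\<in>S. a j * (G i j - G k j / G k j\<^sub>0 * G i j\<^sub>0))
      = (\<Sum>j\<in>S. a j * G i j) - \<nu> * G i j\<^sub>0" for i
    by (simp add: \<nu>_def right_diff_distrib sum_subtractf sum_divide_distrib sum_distrib_right mult_ac,
        simp add: sum_distrib_left mult_ac)
  have "v i = (\<Sum>j\<in>S. c j * G i j)" if "i < Suc k" for i
  proof (cases "i < k")
    case True
    with a a_comb have "v i - \<mu> * G i j\<^sub>0 = (\<Sum>j\<in>S. a j * G i j) - \<nu> * G i j\<^sub>0"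
      by simp
    then show ?thesis
      unfolding c_comb by (simp add: algebra_simps)
  next
    case False
    with that have "i = k" by simp
    with assms(3) show ?thesis by (simp add: c_comb \<mu>_def \<nu>_def field_simps)
  qed
  then show "\<exists>c. \<forall>i<Suc k. v i = (\<Sum>j\<in>S. c j * G i j)" by blast
qed

lemma not_cols_span_imp_annihilator:
  fixes G :: "nat \<Rightarrow> nat \<Rightarrow> 'a::field"
  assumes "finite S" "\<not> cols_span k G S"
  shows "\<exists>c. (\<exists>i<k. c i \<noteq> 0) \<and> (\<forall>j\<in>S. (\<Sum>i<k. c i * G i j) = 0)"
  using assms(2)
proof (induction k arbitrary: G)
  case 0
  then show ?case by (simp add: cols_span_def)
next
  case (Suc k)
  show ?case
  proof (cases "\<forall>j\<in>S. G k j = 0")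
    case True
    show ?thesis
      by (rule exI[of _ "\<lambda>i. if i = k then 1 else 0"]) (auto simp: True if_distrib cong: if_cong)
  next
    case False
    then obtain j\<^sub>0 where j\<^sub>0: "j\<^sub>0 \<in> S" "G k j\<^sub>0 \<noteq> 0" by auto
    define H where "H = (\<lambda>i j. G i j - G k j / G k j\<^sub>0 * G i j\<^sub>0)"
    have "\<not> cols_span k H S"
      using Suc.prems cols_span_Suc_if_cols_span_eliminated[of S j\<^sub>0 G k] assms(1) j\<^sub>0 unfolding H_def by blast
    then obtain c where c: "\<exists>i<k. c i \<noteq> 0" "\<forall>j\<in>S. (\<Sum>i<k. c i * H i j) = 0"
      using Suc.IH by blast
    define c' where "c' = c(k := - (\<Sum>i<k. c i * G i j\<^sub>0) / G k j\<^sub>0)"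
    have "(\<Sum>i<Suc k. c' i * G i j) = (\<Sum>i<k. c i * H i j)" for j
      by (simp add: c'_def H_def right_diff_distrib sum_subtractf sum_distrib_left sum_distrib_right
          sum_divide_distrib mult_ac)
    moreover obtain i where "i < k" "c i \<noteq> 0"
      using c(1) by blast
    then have "i < Suc k" "c' i \<noteq> 0"
      by (simp_all add: c'_def)
    ultimately show ?thesis
      using c(2) by (intro exI[of _ c']) auto
  qed
qed

lemma not_cols_span_if_card_less:
  fixes G :: "nat \<Rightarrow> nat \<Rightarrow> 'a::{field,finite}"
  assumes "finite S" "card S < k"
  shows "\<not> cols_span k G S"
proof
  assume span: "cols_span k G S"
  define comb where "comb = (\<lambda>c::nat \<Rightarrow> 'a. restrict (\<lambda>i. \<Sum>j\<in>S. c j * G i j) {..<k})"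
  have "{..<k} \<rightarrow>\<^sub>E (UNIV::'a set) \<subseteq> comb ` (S \<rightarrow>\<^sub>E UNIV)"
  proof
    fix w :: "nat \<Rightarrow> 'a" assume w: "w \<in> {..<k} \<rightarrow>\<^sub>E UNIV"
    obtain c where c: "\<forall>i<k. w i = (\<Sum>j\<in>S. c j * G i j)"
      using span unfolding cols_span_def by blast
    have "comb (restrict c S) = w"
      using w c unfolding comb_def by (auto simp: PiE_def extensional_def intro!: sum.cong)
    then show "w \<in> comb ` (S \<rightarrow>\<^sub>E UNIV)" by force
  qed
  then have "card ({..<k} \<rightarrow>\<^sub>E (UNIV::'a set)) \<le> card (S \<rightarrow>\<^sub>E (UNIV::'a set))"
    by (rule surj_card_le[rotated]) (simp add: finite_PiE assms(1))
  then have "CARD('a) ^ k \<le> CARD('a) ^ card S"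
    by (simp add: card_PiE assms(1))
  moreover have "CARD('a) ^ card S < CARD('a) ^ k"
  proof (rule power_strict_increasing[OF assms(2)])
    have "card {0::'a, 1} \<le> CARD('a)" by (rule card_mono) auto
    then show "1 < CARD('a)" by simp
  qed
  ultimately show False by linarith
qed

section \<open>Words and the sets of their letters\<close>

lemma card_PiE_lessThan_Suc:
  assumes "finite A"
  shows "card {f \<in> {..<Suc t} \<rightarrow>\<^sub>E A. R (f t) (restrict f {..<t})}
       = (\<Sum>y\<in>A. card {g \<in> {..<t} \<rightarrow>\<^sub>E A. R y g})"
proof -
  let ?ext = "\<lambda>(y, g). g(t := y)"
  let ?Pairs = "SIGMA y:A. {g \<in> {..<t} \<rightarrow>\<^sub>E A. R y g}"
  have "{f \<in> {..<Suc t} \<rightarrow>\<^sub>E A. R (f t) (restrict f {..<t})} = ?ext ` ?Pairs"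
    by (force simp: lessThan_Suc PiE_insert_eq PiE_restrict)
  moreover have "inj_on ?ext ?Pairs"
    by (rule inj_on_subset[OF inj_combinator[of t "{..<t}" "\<lambda>_. A"]]) auto
  ultimately have "card {f \<in> {..<Suc t} \<rightarrow>\<^sub>E A. R (f t) (restrict f {..<t})} = card ?Pairs"
    by (simp add: card_image)
  also have "\<dots> = (\<Sum>y\<in>A. card {g \<in> {..<t} \<rightarrow>\<^sub>E A. R y g})"
    using assms by (intro card_SigmaI) (auto intro: finite_subset[OF _ finite_PiE[of "{..<t}"]])
  finally show ?thesis .
qed

definition words_onto :: "nat \<Rightarrow> 'a set \<Rightarrow> (nat \<Rightarrow> 'a) set" where
  "words_onto t S = {f \<in> {..<t} \<rightarrow>\<^sub>E S. f ` {..<t} = S}"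

lemma words_onto_alphabet:
  "S \<subseteq> A \<Longrightarrow> {f \<in> {..<t} \<rightarrow>\<^sub>E A. f ` {..<t} = S} = words_onto t S"
  unfolding words_onto_def by (auto simp: PiE_def Pi_def)

lemma finite_words_onto:
  assumes "finite S"
  shows "finite (words_onto t S)"
proof (rule finite_subset)
  show "words_onto t S \<subseteq> {..<t} \<rightarrow>\<^sub>E S"
    by (auto simp: words_onto_def)
  show "finite ({..<t} \<rightarrow>\<^sub>E S)"
    using assms by (simp add: finite_PiE)
qed

lemma card_words_onto_empty: "card (words_onto t {}) = (if t = 0 then 1 else 0)"
  by (auto simp: words_onto_def)

lemma words_onto_0: "S \<noteq> {} \<Longrightarrow> words_onto 0 S = {}"
  by (auto simp: words_onto_def)

lemma card_words_onto_Suc: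
  assumes "finite S"
  shows "card (words_onto (Suc t) S)
       = card S * card (words_onto t S) + (\<Sum>x\<in>S. card (words_onto t (S - {x})))"
proof -
  have "card (words_onto (Suc t) S) = (\<Sum>y\<in>S. card {g \<in> {..<t} \<rightarrow>\<^sub>E S. insert y (g ` {..<t}) = S})"
    using card_PiE_lessThan_Suc[OF assms, of t "\<lambda>y g. insert y (g ` {..<t}) = S"]
    by (simp add: words_onto_def lessThan_Suc)
  also have "\<dots> = (\<Sum>y\<in>S. card (words_onto t S) + card (words_onto t (S - {y})))"
  proof (rule sum.cong[OF refl])
    fix y assume "y \<in> S"
    then have "{g \<in> {..<t} \<rightarrow>\<^sub>E S. insert y (g ` {..<t}) = S} = words_onto t S \<union> words_onto t (S - {y})"
      using words_onto_alphabet[of "S - {y}" S t] by (auto simp: words_onto_def)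
    moreover have "words_onto t S \<inter> words_onto t (S - {y}) = {}"
      using \<open>y \<in> S\<close> by (auto simp: words_onto_def)
    ultimately show "card {g \<in> {..<t} \<rightarrow>\<^sub>E S. insert y (g ` {..<t}) = S}
        = card (words_onto t S) + card (words_onto t (S - {y}))"
      using assms by (simp add: card_Un_disjoint finite_words_onto)
  qed
  finally show ?thesis by (simp add: sum.distrib)
qed

lemma words_onto_ratio_le:
  assumes "finite S"
  shows "real (card (words_onto t S)) / real n ^ t \<le> (real (card S) / real n) ^ t"
proof -
  have "card (words_onto t S) \<le> card ({..<t} \<rightarrow>\<^sub>E S)"
    using assms by (intro card_mono finite_PiE) (auto simp: words_onto_def)
  then have "real (card (words_onto t S)) \<le> real (card S) ^ t"
    by (simp add: card_PiE flip: of_nat_power)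
  then show ?thesis
    by (simp add: power_divide divide_right_mono)
qed

lemma summable_words_onto_ratio:
  assumes "finite S" "card S < n"
  shows "summable (\<lambda>t. real (card (words_onto t S)) / real n ^ t)"
proof (rule summable_comparison_test')
  show "summable (\<lambda>t. (real (card S) / real n) ^ t)"
    using assms(2) by (intro summable_geometric) simp
  show "norm (real (card (words_onto t S)) / real n ^ t) \<le> (real (card S) / real n) ^ t" for t
    using words_onto_ratio_le[OF assms(1)] by simp
qed

lemma times_words_onto_ratio_tendsto_0:
  assumes "finite S" "card S < n"
  shows "(\<lambda>t. real t * (real (card (words_onto t S)) / real n ^ t)) \<longlonglongrightarrow> 0"
proof (rule tendsto_sandwich[of "\<lambda>_. 0" _ _ "\<lambda>t. real t * (real (card S) / real n) ^ t"])
  show "(\<lambda>t. real t * (real (card S) / real n) ^ t) \<longlonglongrightarrow> 0"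
    using assms(2) by (intro powser_times_n_limit_0) simp
  show "\<forall>\<^sub>F t in sequentially. real t * (real (card (words_onto t S)) / real n ^ t)
      \<le> real t * (real (card S) / real n) ^ t"
    using words_onto_ratio_le[OF assms(1)] by (intro always_eventually allI mult_left_mono) auto
qed auto

lemma fixpoint_eq_inverse_binomial:
  fixes L :: real
  assumes "Suc s < n"
    and "L = real (Suc s) / real n * L + real (Suc s) / (real n * real ((n - 1) choose s))"
  shows "L = 1 / real ((n - 1) choose Suc s)"
proof -
  have "n > 0" "(n - 1) choose s > 0" "(n - 1) choose Suc s > 0"
    using assms(1) by simp_all
  have "real n * L = real n * (real (Suc s) / real n * L
      + real (Suc s) / (real n * real ((n - 1) choose s)))"
    using assms(2) by (rule arg_cong)
  also have "\<dots> = real (Suc s) * L + real (Suc s) / real ((n - 1) choose s)"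
    using \<open>n > 0\<close> \<open>(n - 1) choose s > 0\<close> by (simp add: field_simps)
  finally have L_eq: "(real n - real (Suc s)) * real ((n - 1) choose s) * L = real (Suc s)"
    using \<open>(n - 1) choose s > 0\<close> by (simp add: field_simps)
  have "Suc s * ((n - 1) choose Suc s) = (n - Suc s) * ((n - 1) choose s)"
    using binomial_absorption[of s "n - 1"] binomial_absorb_comp[of "n - 1" s] by simp
  then have "real (Suc s * ((n - 1) choose Suc s)) = real ((n - Suc s) * ((n - 1) choose s))"
    by (rule arg_cong)
  then have binom: "real (Suc s) * real ((n - 1) choose Suc s) = (real n - real (Suc s)) * real ((n - 1) choose s)"
    by (simp only: of_nat_mult of_nat_diff[OF less_imp_le[OF assms(1)]])
  have "real (Suc s) * (real ((n - 1) choose Suc s) * L) = real (Suc s) * real ((n - 1) choose Suc s) * L"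
    by (rule mult.assoc[symmetric])
  also have "\<dots> = real (Suc s)"
    unfolding binom by (rule L_eq)
  finally have "real ((n - 1) choose Suc s) * L = 1"
    by simp
  with \<open>(n - 1) choose Suc s > 0\<close> show ?thesis
    by (simp add: field_simps)
qed

text \<open>The series is the expected number of times \<open>t\<close> at which the set of the first \<open>t\<close> letters
  of a uniformly random word over \<open>{..<n}\<close> is exactly \<open>S\<close>.\<close>
lemma words_onto_ratio_sums:
  assumes "finite S" "card S < n"
  shows "(\<lambda>t. real (card (words_onto t S)) / real n ^ t) sums (1 / real ((n - 1) choose card S))"
  using assms
proof (induction "card S" arbitrary: S)
  case 0
  then have "S = {}" by simp
  then have "(\<lambda>t. real (card (words_onto t S)) / real n ^ t) = (\<lambda>t. if t = 0 then 1 else 0)"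
    by (auto simp: card_words_onto_empty fun_eq_iff)
  with \<open>S = {}\<close> show ?case
    using sums_single[of 0 "\<lambda>_. 1::real"] by simp
next
  case (Suc s S)
  define r where "r = Suc s"
  define g where "g t = real (card (words_onto t S)) / real n ^ t" for t
  define L where "L = suminf g"
  have "n > 0" "r < n" "card S = r"
    using Suc.prems Suc.hyps(2) by (simp_all add: r_def)
  have g_sums: "g sums L"
    unfolding L_def g_def using Suc.prems by (intro summable_sums summable_words_onto_ratio)
  have IH: "(\<lambda>t. real (card (words_onto t (S - {x}))) / real n ^ t) sums (1 / real ((n - 1) choose s))"
    if "x \<in> S" for x
  proof -
    have "card (S - {x}) = s"
      using that Suc.hyps(2) Suc.prems(1) by simp
    then show ?thesis
      using Suc.hyps(1)[of "S - {x}"] Suc.hyps(2) Suc.prems by simp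
  qed
  have g_Suc: "g (Suc t) = real r / real n * g t
      + 1 / real n * (\<Sum>x\<in>S. real (card (words_onto t (S - {x}))) / real n ^ t)" for t
    using \<open>n > 0\<close> \<open>card S = r\<close> Suc.prems(1)
    by (simp add: g_def card_words_onto_Suc field_simps sum_divide_distrib[symmetric])
  have "S \<noteq> {}"
    using \<open>card S = r\<close> by (auto simp: r_def)
  then have "g 0 = 0"
    by (simp add: g_def words_onto_0)
  have "(\<lambda>t. g (Suc t)) sums (real r / real n * L + 1 / real n * (\<Sum>x\<in>S. 1 / real ((n - 1) choose s)))"
    unfolding g_Suc by (intro sums_add sums_mult sums_sum IH g_sums)
  then have "g sums (real r / real n * L + real r / (real n * real ((n - 1) choose s)))"
    unfolding sums_Suc_iff using \<open>g 0 = 0\<close> \<open>card S = r\<close> by simp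
  then have "L = real r / real n * L + real r / (real n * real ((n - 1) choose s))"
    by (rule sums_unique2[OF g_sums])
  with \<open>r < n\<close> have "L = 1 / real ((n - 1) choose r)"
    unfolding r_def by (rule fixpoint_eq_inverse_binomial)
  then show ?case
    using g_sums \<open>card S = r\<close> unfolding g_def by simp
qed

section \<open>Waiting for a monotone goal\<close>

lemma sums_Suc_times_diff:
  fixes a :: "nat \<Rightarrow> real"
  assumes "a sums L" and "(\<lambda>t. real t * a t) \<longlonglongrightarrow> 0"
  shows "(\<lambda>t. real (Suc t) * (a t - a (Suc t))) sums L"
proof -
  have partial: "(\<Sum>t<M. real (Suc t) * (a t - a (Suc t))) = (\<Sum>t<M. a t) - real M * a M" for M
    by (induction M) (simp_all add: algebra_simps)
  have "(\<lambda>M. (\<Sum>t<M. a t) - real M * a M) \<longlonglongrightarrow> L - 0"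
    using assms unfolding sums_def by (intro tendsto_diff)
  then show ?thesis
    unfolding sums_def partial by simp
qed

definition stop_prob :: "(nat set \<Rightarrow> bool) \<Rightarrow> nat \<Rightarrow> nat \<Rightarrow> real" where
  "stop_prob P n t =
     real (card {f \<in> {..<t} \<rightarrow>\<^sub>E {..<n}. P (f ` {..<t}) \<and> \<not> P (f ` {..<t - 1})}) / real n ^ t"

lemma stop_prob_0 [simp]: "stop_prob P n 0 = 0"
  by (simp add: stop_prob_def)

locale monotone_goal =
  fixes P :: "nat set \<Rightarrow> bool" and n :: nat
  assumes goal_mono: "P S \<Longrightarrow> S \<subseteq> T \<Longrightarrow> T \<subseteq> {..<n} \<Longrightarrow> P T"
    and goal_full: "P {..<n}"
    and goal_not_empty: "\<not> P {}"
begin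

definition failing_sets :: "nat set set" where
  "failing_sets = {S. S \<subseteq> {..<n} \<and> \<not> P S}"

definition tail_prob :: "nat \<Rightarrow> real" where
  "tail_prob t = real (card {f \<in> {..<t} \<rightarrow>\<^sub>E {..<n}. \<not> P (f ` {..<t})}) / real n ^ t"

lemma n_pos: "n > 0"
  using goal_full goal_not_empty by (cases n) auto

lemma finite_failing_sets: "finite failing_sets"
  unfolding failing_sets_def by (rule finite_subset[of _ "Pow {..<n}"]) auto

lemma failing_set_card_less:
  assumes "S \<in> failing_sets"
  shows "finite S" and "card S < n"
proof -
  have "S \<subset> {..<n}"
    using assms goal_full unfolding failing_sets_def by auto
  then show "finite S"
    using finite_subset[of S "{..<n}"] by blast
  show "card S < n"
    using psubset_card_mono[OF finite_lessThan \<open>S \<subset> {..<n}\<close>] by simp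
qed

lemma tail_prob_eq_sum:
  "tail_prob t = (\<Sum>S\<in>failing_sets. real (card (words_onto t S)) / real n ^ t)"
proof -
  have "{f \<in> {..<t} \<rightarrow>\<^sub>E {..<n}. \<not> P (f ` {..<t})}
      = (\<Union>S\<in>failing_sets. {f \<in> {..<t} \<rightarrow>\<^sub>E {..<n}. f ` {..<t} = S})"
    unfolding failing_sets_def by (auto simp: PiE_def Pi_def)
  also have "\<dots> = (\<Union>S\<in>failing_sets. words_onto t S)"
    by (rule SUP_cong[OF refl], rule words_onto_alphabet) (simp add: failing_sets_def)
  finally have "card {f \<in> {..<t} \<rightarrow>\<^sub>E {..<n}. \<not> P (f ` {..<t})}
      = card (\<Union>S\<in>failing_sets. words_onto t S)"
    by simp
  also have "\<dots> = (\<Sum>S\<in>failing_sets. card (words_onto t S))"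
  proof (rule card_UN_disjoint[OF finite_failing_sets])
    show "\<forall>S\<in>failing_sets. finite (words_onto t S)"
      using failing_set_card_less(1) finite_words_onto by blast
    show "\<forall>S\<in>failing_sets. \<forall>S'\<in>failing_sets. S \<noteq> S' \<longrightarrow> words_onto t S \<inter> words_onto t S' = {}"
      by (auto simp: words_onto_def)
  qed
  finally show ?thesis
    unfolding tail_prob_def by (simp add: sum_divide_distrib)
qed

lemma tail_prob_sums: "tail_prob sums (\<Sum>S\<in>failing_sets. 1 / real ((n - 1) choose card S))"
  unfolding tail_prob_eq_sum[abs_def]
  using failing_set_card_less by (intro sums_sum words_onto_ratio_sums)

lemma times_tail_prob_tendsto_0: "(\<lambda>t. real t * tail_prob t) \<longlonglongrightarrow> 0"
proof -
  have "(\<lambda>t. \<Sum>S\<in>failing_sets. real t * (real (card (words_onto t S)) / real n ^ t)) \<longlonglongrightarrow> 0"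
    using failing_set_card_less
    by (intro tendsto_null_sum times_words_onto_ratio_tendsto_0)
  then show ?thesis
    by (simp add: tail_prob_eq_sum sum_distrib_left)
qed

lemma stop_prob_Suc: "stop_prob P n (Suc t) = tail_prob t - tail_prob (Suc t)"
proof -
  define Before where
    "Before = {f \<in> {..<Suc t} \<rightarrow>\<^sub>E {..<n}. \<not> P (restrict f {..<t} ` {..<t})}"
  define After where "After = {f \<in> {..<Suc t} \<rightarrow>\<^sub>E {..<n}. \<not> P (f ` {..<Suc t})}"
  have "card Before = n * card {f \<in> {..<t} \<rightarrow>\<^sub>E {..<n}. \<not> P (f ` {..<t})}"
    unfolding Before_def
    using card_PiE_lessThan_Suc[of "{..<n}" t "\<lambda>_ g. \<not> P (g ` {..<t})"] by simp
  moreover have "After \<subseteq> Before"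
  proof
    fix f assume "f \<in> After"
    then have "f \<in> {..<Suc t} \<rightarrow>\<^sub>E {..<n}" "\<not> P (f ` {..<Suc t})"
      unfolding After_def by auto
    moreover from this have "f ` {..<Suc t} \<subseteq> {..<n}" "f ` {..<t} \<subseteq> f ` {..<Suc t}"
      by auto
    ultimately show "f \<in> Before"
      unfolding Before_def using goal_mono[of "f ` {..<t}" "f ` {..<Suc t}"] by auto
  qed
  moreover have "{f \<in> {..<Suc t} \<rightarrow>\<^sub>E {..<n}. P (f ` {..<Suc t}) \<and> \<not> P (f ` {..<t})} = Before - After"
    unfolding Before_def After_def by auto
  moreover have "finite Before"
    unfolding Before_def by (rule finite_subset[of _ "{..<Suc t} \<rightarrow>\<^sub>E {..<n}"]) (auto simp: finite_PiE)
  ultimately have "real (card {f \<in> {..<Suc t} \<rightarrow>\<^sub>E {..<n}. P (f ` {..<Suc t}) \<and> \<not> P (f ` {..<t})})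
      = real n * real (card {f \<in> {..<t} \<rightarrow>\<^sub>E {..<n}. \<not> P (f ` {..<t})}) - real (card After)"
    using finite_subset[of After Before] card_mono[of Before After] by (simp add: card_Diff_subset of_nat_diff)
  then show ?thesis
    using n_pos by (simp add: stop_prob_def tail_prob_def After_def field_simps)
qed

lemma expected_stop_sums:
  "(\<lambda>t. real t * stop_prob P n t) sums (\<Sum>S\<in>failing_sets. 1 / real ((n - 1) choose card S))"
proof -
  have "(\<lambda>t. real (Suc t) * stop_prob P n (Suc t))
      sums (\<Sum>S\<in>failing_sets. 1 / real ((n - 1) choose card S))"
    unfolding stop_prob_Suc by (rule sums_Suc_times_diff[OF tail_prob_sums times_tail_prob_tendsto_0])
  then show ?thesis
    using sums_Suc_iff[of "\<lambda>t. real t * stop_prob P n t"] by simp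
qed

end

section \<open>Sums over subsets by size\<close>

lemma sum_card_subsets_not_P:
  fixes f :: "nat \<Rightarrow> real"
  assumes "\<And>S. S \<subseteq> {..<n} \<Longrightarrow> \<not> P S \<Longrightarrow> card S \<le> m"
  shows "(\<Sum>S\<in>{S. S \<subseteq> {..<n} \<and> \<not> P S}. f (card S))
       = (\<Sum>s\<le>m. (real (n choose s) - real (card {S. S \<subseteq> {..<n} \<and> card S = s \<and> P S})) * f s)"
proof -
  let ?F = "{S. S \<subseteq> {..<n} \<and> \<not> P S}"
  have fin: "finite {S. S \<subseteq> {..<n} \<and> Q S}" for Q :: "nat set \<Rightarrow> bool"
    by (rule finite_subset[of _ "Pow {..<n}"]) auto
  have count: "real (card {S \<in> ?F. card S = s})
      = real (n choose s) - real (card {S. S \<subseteq> {..<n} \<and> card S = s \<and> P S})" for s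
  proof -
    have "{S. S \<subseteq> {..<n} \<and> card S = s}
        = {S \<in> ?F. card S = s} \<union> {S. S \<subseteq> {..<n} \<and> card S = s \<and> P S}"
      by auto
    then have "n choose s = card {S \<in> ?F. card S = s} + card {S. S \<subseteq> {..<n} \<and> card S = s \<and> P S}"
      using n_subsets[of "{..<n}" s] fin by (simp add: card_Un_disjoint disjoint_iff)
    then show ?thesis
      by simp
  qed
  have "(\<Sum>S\<in>?F. f (card S)) = (\<Sum>s\<le>m. \<Sum>S\<in>{S \<in> ?F. card S = s}. f (card S))"
    using assms fin by (intro sum.group[symmetric]) auto
  also have "\<dots> = (\<Sum>s\<le>m. real (card {S \<in> ?F. card S = s}) * f s)"
    by simp
  finally show ?thesis
    unfolding count .
qed

lemma sum_inverse_diff_eq_harm: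
  "j \<le> n \<Longrightarrow> (\<Sum>s<j. 1 / real (n - s)) = harm n - harm (n - j)"
proof (induction j)
  case (Suc j)
  then have "n - j = Suc (n - Suc j)"
    by simp
  with Suc show ?case
    by (simp add: harm_Suc inverse_eq_divide)
qed simp

lemma sum_binomial_ratio_eq_harm:
  assumes "m < n"
  shows "(\<Sum>s\<le>m. real (n choose s) / real ((n - 1) choose s)) = real n * (harm n - harm (n - Suc m))"
proof -
  have "real (n choose s) / real ((n - 1) choose s) = real n * (1 / real (n - s))" if "s \<le> m" for s
  proof -
    have "real (n - s) * real (n choose s) = real n * real ((n - 1) choose s)"
      using binomial_absorb_comp[of n s] by (metis of_nat_mult)
    moreover have "s < n" "(n - 1) choose s > 0"
      using that assms by simp_all
    ultimately show ?thesis
      by (simp add: field_simps)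
  qed
  then have "(\<Sum>s\<le>m. real (n choose s) / real ((n - 1) choose s)) = real n * (\<Sum>s<Suc m. 1 / real (n - s))"
    by (simp add: sum_distrib_left lessThan_Suc_atMost)
  also have "\<dots> = real n * (harm n - harm (n - Suc m))"
    using assms by (subst sum_inverse_diff_eq_harm) simp_all
  finally show ?thesis .
qed

section \<open>Linear codes\<close>

lemma hamming_weight_le: "hamming_weight n x \<le> n"
  unfolding hamming_weight_def using card_mono[of "{..<n}" "{j. j < n \<and> x j \<noteq> 0}"] by auto

lemma hamming_weight_pos:
  assumes "x \<in> space_n n" and "x \<noteq> (\<lambda>_. 0)"
  shows "hamming_weight n x > 0"
proof -
  obtain j where "x j \<noteq> 0"
    using assms(2) by auto
  moreover from this have "j < n"
    using assms(1) unfolding space_n_def by (auto simp flip: not_less)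
  ultimately show ?thesis
    unfolding hamming_weight_def by (auto simp: card_gt_0_iff)
qed

lemma min_dist_le_hamming_weight:
  assumes "x \<in> C" and "x \<noteq> (\<lambda>_. 0)"
  shows "min_dist n C \<le> hamming_weight n x"
  unfolding min_dist_def
  by (rule Min_le) (use assms hamming_weight_le in \<open>auto intro: finite_subset[of _ "{..n}"]\<close>)

lemma min_dist_between_1_and_length:
  assumes "C \<subseteq> space_n n" and "x \<in> C" and "x \<noteq> (\<lambda>_. 0)"
  shows "1 \<le> min_dist n C" and "min_dist n C \<le> n"
proof -
  have "min_dist n C \<in> {hamming_weight n x | x. x \<in> C \<and> x \<noteq> (\<lambda>_. 0)}"
    unfolding min_dist_def using assms(2,3) hamming_weight_le
    by (intro Min_in) (auto intro: finite_subset[of _ "{..n}"])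
  then show "1 \<le> min_dist n C"
    using assms(1) hamming_weight_pos by fastforce
  show "min_dist n C \<le> n"
    using min_dist_le_hamming_weight[OF assms(2,3)] hamming_weight_le[of n x] le_trans by blast
qed

lemma generator_matrix_codeword:
  assumes "generator_matrix k n G C"
  shows "(\<lambda>j. if j < n then \<Sum>i<k. c i * G i j else 0) \<in> C"
    and "(\<exists>i<k. c i \<noteq> 0) \<Longrightarrow> (\<lambda>j. if j < n then \<Sum>i<k. c i * G i j else 0) \<noteq> (\<lambda>_. 0)"
proof -
  show "(\<lambda>j. if j < n then \<Sum>i<k. c i * G i j else 0) \<in> C"
    using assms unfolding generator_matrix_def code_of_def by blast
  show "(\<lambda>j. if j < n then \<Sum>i<k. c i * G i j else 0) \<noteq> (\<lambda>_. 0)" if "\<exists>i<k. c i \<noteq> 0"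
  proof
    assume "(\<lambda>j. if j < n then \<Sum>i<k. c i * G i j else 0) = (\<lambda>_. 0)"
    then have "\<forall>j<n. (\<Sum>i<k. c i * G i j) = 0"
      by (metis (mono_tags, lifting))
    with assms that show False
      unfolding generator_matrix_def rows_indep_def by blast
  qed
qed

text \<open>A row combination vanishing on the columns in \<open>S\<close> is a nonzero codeword supported outside \<open>S\<close>.\<close>
lemma card_add_min_dist_le_if_not_cols_span:
  assumes "generator_matrix k n G C" and "S \<subseteq> {..<n}" and "\<not> cols_span k G S"
  shows "card S + min_dist n C \<le> n"
proof -
  have "finite S"
    using assms(2) finite_subset by blast
  then obtain c where c: "\<exists>i<k. c i \<noteq> 0" "\<forall>j\<in>S. (\<Sum>i<k. c i * G i j) = 0"
    using not_cols_span_imp_annihilator assms(3) by blast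
  define x where "x = (\<lambda>j. if j < n then \<Sum>i<k. c i * G i j else 0)"
  have "min_dist n C \<le> hamming_weight n x"
    unfolding x_def using generator_matrix_codeword[OF assms(1)] c(1)
    by (intro min_dist_le_hamming_weight) auto
  also have "\<dots> \<le> card ({..<n} - S)"
    unfolding hamming_weight_def x_def using c(2) by (intro card_mono) auto
  also have "\<dots> = n - card S"
    using assms(2) \<open>finite S\<close> by (simp add: card_Diff_subset)
  finally show ?thesis
    using card_mono[OF finite_lessThan assms(2)] by simp
qed

lemma not_cols_span_empty: "0 < k \<Longrightarrow> \<not> cols_span k G {}"
  unfolding cols_span_def by (auto intro!: exI[of _ "\<lambda>_. 1"])

lemma alpha_eq_0_if_less:
  fixes G :: "nat \<Rightarrow> nat \<Rightarrow> 'a::{field,finite}"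
  assumes "s < k"
  shows "alpha k n G s = 0"
proof -
  have "{S. S \<subseteq> {..<n} \<and> card S = s \<and> cols_span k G S} = {}"
    using assms not_cols_span_if_card_less[of _ k G] finite_subset[of _ "{..<n}"] by blast
  then show ?thesis
    unfolding alpha_def by simp
qed

lemma prob_stop_eq_stop_prob: "prob_stop k n G = stop_prob (cols_span k G) n"
  by (simp add: fun_eq_iff prob_stop_def stop_prob_def)

context
  fixes G :: "nat \<Rightarrow> nat \<Rightarrow> 'a::field" and C :: "(nat \<Rightarrow> 'a) set" and k n :: nat
  assumes k_pos: "0 < k"
    and linear: "linear_code n C"
    and generator: "generator_matrix k n G C"
begin

lemma min_dist_bounds: "1 \<le> min_dist n C" "min_dist n C \<le> n"
proof -
  have "C \<subseteq> space_n n"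
    using linear unfolding linear_code_def by blast
  moreover obtain x where "x \<in> C" "x \<noteq> (\<lambda>_. 0)"
    using generator_matrix_codeword[OF generator, of "\<lambda>i. if i = 0 then 1 else 0"] k_pos by auto
  ultimately show "1 \<le> min_dist n C" "min_dist n C \<le> n"
    using min_dist_between_1_and_length by blast+
qed

lemma card_le_if_not_cols_span:
  assumes "S \<subseteq> {..<n}" and "\<not> cols_span k G S"
  shows "card S \<le> n - min_dist n C"
  using card_add_min_dist_le_if_not_cols_span[OF generator assms] by simp

lemma monotone_goal_cols_span: "monotone_goal (cols_span k G) n"
proof
  show "cols_span k G T" if "cols_span k G S" "S \<subseteq> T" "T \<subseteq> {..<n}" for S T
    using that cols_span_mono finite_subset by blast
  show "cols_span k G {..<n}"
    using card_le_if_not_cols_span[of "{..<n}"] min_dist_bounds by fastforce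
  show "\<not> cols_span k G {}"
    using k_pos by (rule not_cols_span_empty)
qed

lemma expected_draws_eq_sum_by_size:
  "expected_draws k n G
     = (\<Sum>s\<le>n - min_dist n C. (real (n choose s) - real (alpha k n G s)) / real ((n - 1) choose s))"
proof -
  interpret monotone_goal "cols_span k G" n
    by (rule monotone_goal_cols_span)
  have "expected_draws k n G = (\<Sum>S\<in>failing_sets. 1 / real ((n - 1) choose card S))"
    unfolding expected_draws_def prob_stop_eq_stop_prob
    by (rule sums_unique[OF expected_stop_sums, symmetric])
  also have "\<dots> = (\<Sum>s\<le>n - min_dist n C. (real (n choose s) - real (alpha k n G s)) / real ((n - 1) choose s))"
    unfolding failing_sets_def alpha_def using card_le_if_not_cols_span
    by (subst sum_card_subsets_not_P) auto
  finally show ?thesis .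
qed

end

theorem mainTheorem7:
  fixes G :: "nat \<Rightarrow> nat \<Rightarrow> 'a::{field,finite}"
    and C :: "(nat \<Rightarrow> 'a) set"
    and k n d :: nat
  assumes "2 \<le> k" and "k \<le> n"
    and "linear_code n C"
    and "generator_matrix k n G C"
    and "d = min_dist n C"
  shows "expected_draws k n G =
           real n * (harm n - harm (d - 1))
           - (\<Sum>s=k..n-d. real (alpha k n G s) / real ((n - 1) choose s))"
proof -
  have "0 < k"
    using assms(1) by simp
  note min_dist = min_dist_bounds[OF this assms(3,4), folded assms(5)]
  have "expected_draws k n G
      = (\<Sum>s\<le>n - d. real (n choose s) / real ((n - 1) choose s))
        - (\<Sum>s\<le>n - d. real (alpha k n G s) / real ((n - 1) choose s))"
    unfolding expected_draws_eq_sum_by_size[OF \<open>0 < k\<close> assms(3,4)] assms(5)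
    by (simp add: diff_divide_distrib sum_subtractf)
  also have "(\<Sum>s\<le>n - d. real (n choose s) / real ((n - 1) choose s)) = real n * (harm n - harm (d - 1))"
    using min_dist sum_binomial_ratio_eq_harm[of "n - d" n] by simp
  also have "(\<Sum>s\<le>n - d. real (alpha k n G s) / real ((n - 1) choose s))
      = (\<Sum>s=k..n - d. real (alpha k n G s) / real ((n - 1) choose s))"
    by (rule sum.mono_neutral_right) (auto simp: alpha_eq_0_if_less)
  finally show ?thesis .
qed

end
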